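(* Let $G=\langle r_1,r_2,s_1,s_2,c\ :\ r_1r_2=r_2r_1,\ s_1s_2=s_2s_1,\ r_1s_1c=cr_1s_1=s_1cr_1,\ r_2s_2c=s_2cr_2=cr_2s_2\rangle$, let $F=\langle r',s'\rangle$ be the free group of rank $2$, and let $p_x,p_y:G\to F$ be the homomorphisms with $p_x(r_1)=r'$, $p_x(s_2)=s'$, $p_x(r_2)=p_x(s_1)=p_x(c)=1$ and $p_y(r_2)=r'$, $p_y(s_1)=s'$, $p_y(r_1)=p_y(s_2)=p_y(c)=1$. Let $H\subseteq G$ be the subgroup generated by $r_1r_2$, $s_1s_2$, $c$, and let $g=s_2cr_1s_1cr_2$. Then $p_x(g)=p_y(g)$, $g$ has infinite order in $G$, and $g^n\notin H$ for every integer $n\neq0$.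
   Context: All groups are given by generators and relations as written; $p_x$ and $p_y$ are well-defined homomorphisms on $G$. *)

theory Defs
  imports "HOL-Algebra.Algebra"
begin

text \<open>A word over generators of type 'a is a list of letters (x, e);
  e = False means the generator x, e = True means its inverse.\<close>

type_synonym 'a word = "('a \<times> bool) list"

definition word_inv :: "'a word \<Rightarrow> 'a word" where
  "word_inv w = rev (map (\<lambda>(x, e). (x, \<not> e)) w)"

inductive pres_eq :: "'a word set \<Rightarrow> 'a word \<Rightarrow> 'a word \<Rightarrow> bool" for rels where
  refl: "pres_eq rels w w"
| sym: "pres_eq rels v w \<Longrightarrow> pres_eq rels w v"
| trans: "pres_eq rels u v \<Longrightarrow> pres_eq rels v w \<Longrightarrow> pres_eq rels u w"
| cancel: "pres_eq rels (u @ [(x, e), (x, \<not> e)] @ v) (u @ v)"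
| relator: "r \<in> rels \<Longrightarrow> pres_eq rels (u @ r @ v) (u @ v)"

definition pclass :: "'a word set \<Rightarrow> 'a word \<Rightarrow> 'a word set" where
  "pclass rels w = {v. pres_eq rels w v}"

definition pres_group :: "'a word set \<Rightarrow> ('a word set) monoid" where
  "pres_group rels =
     \<lparr> carrier = range (pclass rels),
       monoid.mult = (\<lambda>A B. \<Union> {pclass rels (u @ v) | u v. u \<in> A \<and> v \<in> B}),
       one = pclass rels [] \<rparr>"

datatype gen = R1 | R2 | S1 | S2 | C

datatype fgen = R' | S'

definition gp :: "gen \<Rightarrow> gen word" where "gp x = [(x, False)]"

definition G_rels :: "gen word set" where
  "G_rels =
    { gp R1 @ gp R2 @ word_inv (gp R2 @ gp R1),
      gp S1 @ gp S2 @ word_inv (gp S2 @ gp S1),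
      gp R1 @ gp S1 @ gp C @ word_inv (gp C @ gp R1 @ gp S1),
      gp C @ gp R1 @ gp S1 @ word_inv (gp S1 @ gp C @ gp R1),
      gp R2 @ gp S2 @ gp C @ word_inv (gp S2 @ gp C @ gp R2),
      gp S2 @ gp C @ gp R2 @ word_inv (gp C @ gp R2 @ gp S2) }"

definition GG :: "(gen word set) monoid" where "GG = pres_group G_rels"

definition FF :: "(fgen word set) monoid" where "FF = pres_group {}"

fun px_letter :: "gen \<times> bool \<Rightarrow> fgen word" where
  "px_letter (R1, e) = [(R', e)]"
| "px_letter (S2, e) = [(S', e)]"
| "px_letter (_, e) = []"

fun py_letter :: "gen \<times> bool \<Rightarrow> fgen word" where
  "py_letter (R2, e) = [(R', e)]"
| "py_letter (S1, e) = [(S', e)]"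
| "py_letter (_, e) = []"

definition px :: "gen word set \<Rightarrow> fgen word set" where
  "px A = \<Union> {pclass {} (concat (map px_letter w)) | w. w \<in> A}"

definition py :: "gen word set \<Rightarrow> fgen word set" where
  "py A = \<Union> {pclass {} (concat (map py_letter w)) | w. w \<in> A}"

definition HH :: "gen word set set" where
  "HH = generate GG {pclass G_rels (gp R1 @ gp R2), pclass G_rels (gp S1 @ gp S2),
                     pclass G_rels (gp C)}"

definition g_elem :: "gen word set" where
  "g_elem = pclass G_rels (gp S2 @ gp C @ gp R1 @ gp S1 @ gp C @ gp R2)"

end

theory Submission
  imports Defs
begin

text \<open>The equality \<open>p\<^sub>x(g) = p\<^sub>y(g)\<close> is a computation on words. For the other two
  claims let \<open>G\<close> act on \<open>\<int>\<^sup>2\<close>: \<open>r\<^sub>i\<close> by \<open>(x, y) \<mapsto> (1 - x, y)\<close>, \<open>s\<^sub>i\<close> by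
  \<open>(x, y) \<mapsto> (-x, y)\<close> and \<open>c\<close> by \<open>(x, y) \<mapsto> (x - 1, y + 1)\<close>; all relators act trivially.
  Then \<open>g\<close> acts as the translation \<open>(x, y) \<mapsto> (x, y + 2)\<close>, so \<open>g\<^sup>n\<close> moves \<open>x + y\<close> by
  \<open>2n\<close>, whereas \<open>r\<^sub>1r\<^sub>2\<close> and \<open>s\<^sub>1s\<^sub>2\<close> act trivially and \<open>c\<close> preserves \<open>x + y\<close>, hence so
  does every element of \<open>H\<close>.\<close>

lemma pres_eq_context:
  assumes "pres_eq R u u'"
  shows "pres_eq R (a @ u @ b) (a @ u' @ b)"
  using assms
proof (induction rule: pres_eq.induct)
  case (cancel u x e v)
  show ?case using pres_eq.cancel[of R "a @ u" x e "v @ b"] by simp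
next
  case (relator r u v)
  show ?case using pres_eq.relator[OF relator, of "a @ u" "v @ b"] by simp
qed (auto intro: pres_eq.intros)

lemma pres_eq_append:
  assumes "pres_eq R u u'" "pres_eq R v v'"
  shows "pres_eq R (u @ v) (u' @ v')"
  using pres_eq_context[OF assms(1), of "[]" v] pres_eq_context[OF assms(2), of u' "[]"]
  by (auto intro: pres_eq.trans)

lemma pres_eq_cancel_pair: "pres_eq R [(x, e), (x, \<not> e)] []"
  using pres_eq.cancel[of R "[]" x e "[]"] by simp

lemma pres_eq_word_inv_cancel: "pres_eq R (word_inv w @ w) []"
proof (induction w)
  case Nil
  show ?case by (simp add: word_inv_def pres_eq.refl)
next
  case (Cons a w)
  obtain x e where a: "a = (x, e)" by (cases a)
  have "pres_eq R (word_inv w @ [(x, \<not> e), (x, \<not> \<not> e)] @ w) (word_inv w @ w)"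
    by (rule pres_eq.cancel)
  then have "pres_eq R (word_inv (a # w) @ a # w) (word_inv w @ w)"
    by (simp add: a word_inv_def)
  then show ?case using Cons by (rule pres_eq.trans)
qed

lemma pclass_eqI: "pres_eq R v w \<Longrightarrow> pclass R v = pclass R w"
  unfolding pclass_def by (auto intro: pres_eq.trans pres_eq.sym)

lemma pclass_self: "w \<in> pclass R w"
  unfolding pclass_def by (simp add: pres_eq.refl)

lemma pclass_eq_iff: "pclass R v = pclass R w \<longleftrightarrow> pres_eq R v w"
  using pclass_eqI pclass_self unfolding pclass_def by blast

lemma carrier_pres_group: "carrier (pres_group R) = range (pclass R)"
  by (simp add: pres_group_def)

lemma one_pres_group: "\<one>\<^bsub>pres_group R\<^esub> = pclass R []"
  by (simp add: pres_group_def)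

lemma mult_pclass: "pclass R u \<otimes>\<^bsub>pres_group R\<^esub> pclass R v = pclass R (u @ v)"
proof -
  have "pclass R (u' @ v') = pclass R (u @ v)" if "u' \<in> pclass R u" "v' \<in> pclass R v" for u' v'
  proof (rule pclass_eqI)
    from that have "pres_eq R u u'" "pres_eq R v v'" by (simp_all add: pclass_def)
    then show "pres_eq R (u' @ v') (u @ v)" by (rule pres_eq.sym[OF pres_eq_append])
  qed
  then have "\<Union> {pclass R (u' @ v') | u' v'. u' \<in> pclass R u \<and> v' \<in> pclass R v} = pclass R (u @ v)"
    using pclass_self by blast
  then show ?thesis by (simp add: pres_group_def)
qed

lemma group_pres_group: "group (pres_group R)"
proof (rule groupI)
  show "\<exists>y\<in>carrier (pres_group R). y \<otimes>\<^bsub>pres_group R\<^esub> x = \<one>\<^bsub>pres_group R\<^esub>"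
    if "x \<in> carrier (pres_group R)" for x
  proof -
    from that obtain w where "x = pclass R w" by (auto simp: carrier_pres_group)
    then have "pclass R (word_inv w) \<otimes>\<^bsub>pres_group R\<^esub> x = \<one>\<^bsub>pres_group R\<^esub>"
      by (simp add: mult_pclass one_pres_group pclass_eqI[OF pres_eq_word_inv_cancel])
    then show ?thesis by (auto simp: carrier_pres_group)
  qed
qed (auto simp: carrier_pres_group one_pres_group mult_pclass)

lemma inv_pclass: "inv\<^bsub>pres_group R\<^esub> (pclass R w) = pclass R (word_inv w)"
proof -
  interpret group "pres_group R" by (rule group_pres_group)
  show ?thesis
    by (rule inv_equality)
      (simp_all add: mult_pclass one_pres_group carrier_pres_group pclass_eqI[OF pres_eq_word_inv_cancel])
qed

lemma pow_pclass: "pclass R w [^]\<^bsub>pres_group R\<^esub> (n::nat) = pclass R (concat (replicate n w))"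
proof (induction n)
  case (Suc n)
  have "concat (replicate n w) @ w = concat (replicate (Suc n) w)"
    by (induction n) auto
  then show ?case using Suc by (simp add: mult_pclass)
qed (simp add: one_pres_group)

lemma concat_map_respects_pres_eq:
  assumes inverse_letters: "\<And>x e. pres_eq Q (f (x, e) @ f (x, \<not> e)) []"
    and relators: "\<And>r. r \<in> R \<Longrightarrow> pres_eq Q (concat (map f r)) []"
  shows "pres_eq R v w \<Longrightarrow> pres_eq Q (concat (map f v)) (concat (map f w))"
proof (induction rule: pres_eq.induct)
  case (cancel u x e v)
  show ?case
    using pres_eq_context[OF inverse_letters, of "concat (map f u)" x e "concat (map f v)"] by simp
next
  case (relator r u v)
  show ?case
    using pres_eq_context[OF relators[OF relator], of "concat (map f u)" "concat (map f v)"] by simp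
qed (auto intro: pres_eq.intros)

lemma concat_map_pclass:
  assumes "\<And>x e. pres_eq Q (f (x, e) @ f (x, \<not> e)) []"
    and "\<And>r. r \<in> R \<Longrightarrow> pres_eq Q (concat (map f r)) []"
  shows "\<Union> {pclass Q (concat (map f v)) | v. v \<in> pclass R w} = pclass Q (concat (map f w))"
proof -
  have "pclass Q (concat (map f v)) = pclass Q (concat (map f w))" if "v \<in> pclass R w" for v
  proof (rule pclass_eqI)
    from that have "pres_eq R v w" by (simp add: pclass_def pres_eq.sym)
    with assms show "pres_eq Q (concat (map f v)) (concat (map f w))"
      by (rule concat_map_respects_pres_eq)
  qed
  then show ?thesis using pclass_self by blast
qed

lemma foldr_respects_pres_eq:
  assumes inverse_letters: "\<And>x e p. act (x, e) (act (x, \<not> e) p) = p"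
    and relators: "\<And>r p. r \<in> R \<Longrightarrow> foldr act r p = p"
  shows "pres_eq R v w \<Longrightarrow> foldr act v = foldr act w"
proof (induction rule: pres_eq.induct)
  case (cancel u x e v)
  show ?case by (rule ext) (simp add: inverse_letters)
next
  case (relator r u v)
  show ?case by (rule ext) (simp add: relators[OF relator])
qed simp_all

lemma px_pclass: "px (pclass G_rels w) = pclass {} (concat (map px_letter w))"
proof -
  have letters: "pres_eq {} (px_letter (x, e) @ px_letter (x, \<not> e)) []" for x e
    by (cases x) (auto intro: pres_eq_cancel_pair pres_eq.refl)
  have relators: "pres_eq {} (concat (map px_letter r)) []" if "r \<in> G_rels" for r
  proof -
    have "concat (map px_letter r) \<in> {[(R', False), (R', True)], [(S', False), (S', True)]}"
      using that by (auto simp: G_rels_def gp_def word_inv_def)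
    then show ?thesis
      using pres_eq_cancel_pair[of "{}" R' False] pres_eq_cancel_pair[of "{}" S' False] by auto
  qed
  show ?thesis
    unfolding px_def by (rule concat_map_pclass[OF letters relators])
qed

lemma py_pclass: "py (pclass G_rels w) = pclass {} (concat (map py_letter w))"
proof -
  have letters: "pres_eq {} (py_letter (x, e) @ py_letter (x, \<not> e)) []" for x e
    by (cases x) (auto intro: pres_eq_cancel_pair pres_eq.refl)
  have relators: "pres_eq {} (concat (map py_letter r)) []" if "r \<in> G_rels" for r
  proof -
    have "concat (map py_letter r) \<in> {[(R', False), (R', True)], [(S', False), (S', True)]}"
      using that by (auto simp: G_rels_def gp_def word_inv_def)
    then show ?thesis
      using pres_eq_cancel_pair[of "{}" R' False] pres_eq_cancel_pair[of "{}" S' False] by auto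
  qed
  show ?thesis
    unfolding py_def by (rule concat_map_pclass[OF letters relators])
qed

text \<open>The sign \<open>e\<close> only matters for \<open>c\<close>: the generators \<open>r\<^sub>i\<close>, \<open>s\<^sub>i\<close> act as involutions.\<close>

fun gen_act :: "gen \<times> bool \<Rightarrow> int \<times> int \<Rightarrow> int \<times> int" where
  "gen_act (R1, e) (x, y) = (1 - x, y)"
| "gen_act (R2, e) (x, y) = (1 - x, y)"
| "gen_act (S1, e) (x, y) = (- x, y)"
| "gen_act (S2, e) (x, y) = (- x, y)"
| "gen_act (C, e) (x, y) = (if e then (x + 1, y - 1) else (x - 1, y + 1))"

abbreviation word_act :: "gen word \<Rightarrow> int \<times> int \<Rightarrow> int \<times> int" where
  "word_act \<equiv> foldr gen_act"

lemma word_act_respects_pres_eq: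
  assumes "pres_eq G_rels v w"
  shows "word_act v = word_act w"
proof -
  have "gen_act (x, e) (gen_act (x, \<not> e) p) = p" for x e p
    by (cases x; cases e; cases p) auto
  moreover have "word_act r p = p" if "r \<in> G_rels" for r p
    using that by (cases p) (auto simp: G_rels_def gp_def word_inv_def)
  ultimately show ?thesis
    using foldr_respects_pres_eq assms by blast
qed

lemma word_act_word_inv: "word_act (word_inv w) (word_act w p) = p"
proof -
  have "word_act (word_inv w @ w) = word_act []"
    by (rule word_act_respects_pres_eq[OF pres_eq_word_inv_cancel])
  from fun_cong[OF this, of p] show ?thesis by simp
qed

definition preserves_sum :: "gen word \<Rightarrow> bool" where
  "preserves_sum w \<longleftrightarrow> (\<forall>p. fst (word_act w p) + snd (word_act w p) = fst p + snd p)"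

lemma preserves_sum_append: "preserves_sum u \<Longrightarrow> preserves_sum v \<Longrightarrow> preserves_sum (u @ v)"
  unfolding preserves_sum_def by (metis foldr_append prod.collapse)

lemma HH_preserves_sum:
  assumes "h \<in> HH"
  obtains w where "h = pclass G_rels w" "preserves_sum w"
proof -
  have "\<exists>w. h = pclass G_rels w \<and> preserves_sum w"
    using assms unfolding HH_def
  proof (induction rule: generate.induct)
    case one
    show ?case by (rule exI[of _ "[]"]) (simp add: GG_def one_pres_group preserves_sum_def)
  next
    case (incl h)
    then show ?case by (auto simp: preserves_sum_def gp_def)
  next
    case (inv h)
    then show ?case by (auto simp: GG_def inv_pclass preserves_sum_def gp_def word_inv_def)
  next
    case (eng h1 h2)
    then show ?case by (auto simp: GG_def mult_pclass intro: preserves_sum_append)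
  qed
  then show ?thesis using that by blast
qed

lemma g_elem_pow_translates:
  assumes "g_elem [^]\<^bsub>GG\<^esub> (n::int) = pclass G_rels w"
  shows "word_act w (x, y) = (x, y + 2 * n)"
proof -
  define W where "W k = concat (replicate k (gp S2 @ gp C @ gp R1 @ gp S1 @ gp C @ gp R2))" for k
  have W_act: "word_act (W k) (x, y) = (x, y + 2 * int k)" for k x y
    unfolding W_def by (induction k arbitrary: y) (auto simp: gp_def)
  have g_pow: "g_elem [^]\<^bsub>GG\<^esub> k = pclass G_rels (W k)" for k :: nat
    by (simp add: g_elem_def GG_def pow_pclass W_def)
  show ?thesis
  proof (cases "n \<ge> 0")
    case True
    then have "pclass G_rels w = pclass G_rels (W (nat n))"
      using assms g_pow int_pow_int[of GG g_elem "nat n"] by simp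
    then show ?thesis
      using True W_act by (simp add: pclass_eq_iff word_act_respects_pres_eq)
  next
    case False
    then have "pclass G_rels w = pclass G_rels (word_inv (W (nat (- n))))"
      using assms int_pow_def2[of GG g_elem n]
      by (simp add: g_pow inv_pclass[of G_rels, folded GG_def])
    then have "word_act w = word_act (word_inv (W (nat (- n))))"
      by (simp add: pclass_eq_iff word_act_respects_pres_eq)
    moreover have "word_act (W (nat (- n))) (x, y + 2 * n) = (x, y)"
      using False W_act[where k = "nat (- n)" and y = "y + 2 * n"] by simp
    ultimately show ?thesis
      using word_act_word_inv[of "W (nat (- n))" "(x, y + 2 * n)"] by simp
  qed
qed

theorem mainTheorem14:
  shows "px g_elem = py g_elem
    \<and> (\<forall>n::nat. n > 0 \<longrightarrow> g_elem [^]\<^bsub>GG\<^esub> n \<noteq> \<one>\<^bsub>GG\<^esub>)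
    \<and> (\<forall>n::int. n \<noteq> 0 \<longrightarrow> g_elem [^]\<^bsub>GG\<^esub> n \<notin> HH)"
proof (intro conjI allI impI notI)
  show "px g_elem = py g_elem"
    by (simp add: g_elem_def px_pclass py_pclass gp_def)
next
  fix n :: nat
  assume "n > 0" and "g_elem [^]\<^bsub>GG\<^esub> n = \<one>\<^bsub>GG\<^esub>"
  then have "g_elem [^]\<^bsub>GG\<^esub> int n = pclass G_rels []"
    by (simp add: int_pow_int GG_def one_pres_group)
  from g_elem_pow_translates[OF this, of 0 0] \<open>n > 0\<close> show False by simp
next
  fix n :: int
  assume "n \<noteq> 0" and "g_elem [^]\<^bsub>GG\<^esub> n \<in> HH"
  then obtain w where w: "g_elem [^]\<^bsub>GG\<^esub> n = pclass G_rels w" "preserves_sum w"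
    by (auto elim: HH_preserves_sum)
  have "fst (word_act w (0, 0)) + snd (word_act w (0, 0)) = 0"
    using w(2) by (simp add: preserves_sum_def)
  with g_elem_pow_translates[OF w(1)] \<open>n \<noteq> 0\<close> show False by simp
qed

end
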